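(* Let $U \in \mathbb{U}_N$ satisfy $|\mathrm{tr}(UU^T)| \ge N(1-\delta)$ for some $\delta\ge 0$. Then $D(U,\mathbb{O}_N) \le \sqrt{\delta}$.
   Context: $\mathbb{U}_N$ is the group of complex $N\times N$ unitary matrices, $U^T$ is the transpose, and $\mathbb{O}_N=\{U\in\mathbb{U}_N: UU^T=U^TU=I\}$ is the orthogonal group (real orthogonal matrices). $\|A\|=\sqrt{\mathrm{tr}(A^\dagger A)}$ is the Frobenius norm. For matrices $A,B$, $D(A,B)=\min_{\theta\in[0,2\pi)}\frac{1}{\sqrt{2N}}\|e^{i\theta}A-B\|$, and for a set $\mathcal{S}$, $D(A,\mathcal{S})=\inf_{B\in\mathcal{S}}D(A,B)$. *)

theory Defs
  imports "HOL-Analysis.Analysis"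
begin

text \<open>N x N complex matrices are modelled as complex^'n^'n with N = CARD('n).\<close>

definition adjoint_mat :: "complex^'n^'n \<Rightarrow> complex^'n^'n" where
  "adjoint_mat A = (\<chi> i j. cnj (A $ j $ i))"

definition unitary_group :: "(complex^'n^'n) set" where
  "unitary_group = {U. U ** adjoint_mat U = mat 1 \<and> adjoint_mat U ** U = mat 1}"

definition orthogonal_group :: "(complex^'n^'n) set" where
  "orthogonal_group = {U \<in> unitary_group. U ** transpose U = mat 1 \<and> transpose U ** U = mat 1}"

definition frob_norm :: "complex^'n^'n \<Rightarrow> real" where
  "frob_norm A = sqrt (Re (trace (adjoint_mat A ** A)))"

definition scale_mat :: "complex \<Rightarrow> complex^'n^'n \<Rightarrow> complex^'n^'n" where
  "scale_mat c A = (\<chi> i j. c * A $ i $ j)"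

definition mat_dist :: "complex^'n^'n \<Rightarrow> complex^'n^'n \<Rightarrow> real" where
  "mat_dist A B = (INF \<theta>\<in>{0..<2*pi}.
      frob_norm (scale_mat (exp (\<i> * complex_of_real \<theta>)) A - B) / sqrt (2 * real CARD('n)))"

definition mat_set_dist :: "complex^'n^'n \<Rightarrow> (complex^'n^'n) set \<Rightarrow> real" where
  "mat_set_dist A S = (INF B\<in>S. mat_dist A B)"

end

theory Submission
  imports Defs
begin

(*
  Choose a phase c = exp(i theta) with c^2 tr(U U^T) = |tr(U U^T)| and write
  A = c U = X + i Y with real matrices X, Y.  Unitarity of A gives X^T X + Y^T Y = I, hence
  X is a contraction and |X|^2 + |Y|^2 = N (Frobenius norms), while
  |tr(U U^T)| = Re tr(A A^T) = |X|^2 - |Y|^2.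
  The core is a real polar-decomposition estimate: for a contraction X there is an orthogonal
  Q with |X|^2 <= tr(Q^T X).  We take Q maximising tr(Q^T X) over the compact orthogonal
  group; comparing with Householder reflections and with plane rotations (products of two
  reflections) shows that M = Q^T X is symmetric positive semidefinite, and for such a
  contraction |M v|^2 <= v . M v, which summed over the standard basis gives the estimate.
  Then |A - Q|^2 = 2N - 2 tr(Q^T X) <= N - |tr(U U^T)| <= N delta, so
  D(U, O_N) <= sqrt(delta / 2) <= sqrt delta.
*)

section \<open>Real matrices, Frobenius inner product and traces\<close>

lemma inner_matrix_eq_trace: "(A::real^'n^'m) \<bullet> B = trace (transpose A ** B)"
proof -
  have "A \<bullet> B = (\<Sum>i\<in>UNIV. \<Sum>j\<in>UNIV. A$i$j * B$i$j)" by (simp add: inner_vec_def)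
  also have "\<dots> = (\<Sum>j\<in>UNIV. \<Sum>i\<in>UNIV. A$i$j * B$i$j)" by (rule sum.swap)
  also have "\<dots> = trace (transpose A ** B)"
    by (simp add: trace_def matrix_matrix_mult_def transpose_def)
  finally show ?thesis .
qed

lemma inner_diff_self: "(x - y) \<bullet> (x - y) = x \<bullet> x + y \<bullet> y - 2 * (y \<bullet> x)"
  for x y :: "'v::real_inner"
  by (simp add: inner_diff_left inner_diff_right inner_commute[of x y])

lemma inner_self_columns: "(A::real^'n^'m) \<bullet> A = (\<Sum>k\<in>UNIV. (norm (A *v axis k 1))^2)"
  unfolding power2_norm_eq_inner inner_vec_def
  by (simp add: matrix_vector_mult_def axis_def if_distrib[where f="\<lambda>x. _ * x"] cong: if_cong)
     (rule sum.swap)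

lemma norm_matrix_vector_sq:
  "(norm ((X::real^'n^'m) *v u))^2 = u \<bullet> ((transpose X ** X) *v u)"
  by (metis power2_norm_eq_inner dot_lmul_matrix inner_commute matrix_vector_mul_assoc
      transpose_matrix_vector)

lemma inner_self_orthogonal:
  assumes "orthogonal_matrix (Q::real^'n^'n)"
  shows "Q \<bullet> Q = real CARD('n)"
  using assms by (simp add: inner_matrix_eq_trace orthogonal_matrix_def trace_I)

lemma matrix_entry_axis: "axis i (1::real) \<bullet> ((M::real^'n^'n) *v axis j 1) = M$i$j"
proof -
  have "(M *v axis j 1) $ i = M$i$j"
    by (simp add: matrix_vector_mult_def axis_def if_distrib[where f="\<lambda>x. _ * x"] cong: if_cong)
  then show ?thesis by (simp add: inner_axis')
qed

lemma trace_as_diagonal_forms: "trace (M::real^'n^'n) = (\<Sum>k\<in>UNIV. axis k 1 \<bullet> (M *v axis k 1))"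
  by (simp add: matrix_entry_axis trace_def)

lemma matrix_mult_diff_left: "(A::real^'n^'n) ** (B - C) = A ** B - A ** C"
  by (simp add: matrix_matrix_mult_def vec_eq_iff sum_subtractf right_diff_distrib)

lemma matrix_mult_diff_right: "((B::real^'n^'n) - C) ** A = B ** A - C ** A"
  by (simp add: matrix_matrix_mult_def vec_eq_iff sum_subtractf left_diff_distrib)

lemma matrix_mult_scaleR_left: "(c *\<^sub>R (A::real^'n^'n)) ** B = c *\<^sub>R (A ** B)"
  by (simp add: matrix_matrix_mult_def vec_eq_iff sum_distrib_left mult_ac)

lemma matrix_mult_scaleR_right: "(A::real^'n^'n) ** (c *\<^sub>R B) = c *\<^sub>R (A ** B)"
  by (simp add: matrix_matrix_mult_def vec_eq_iff sum_distrib_left mult_ac)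

lemma trace_scaleR: "trace (c *\<^sub>R (A::real^'n^'n)) = c * trace A"
  by (simp add: trace_def sum_distrib_left)

section \<open>Householder reflections\<close>

definition outer :: "real^'n \<Rightarrow> real^'n \<Rightarrow> real^'n^'n" where
  "outer u w = (\<chi> k l. u$k * w$l)"

definition householder :: "real^'n \<Rightarrow> real^'n^'n" where
  "householder u = mat 1 - (2 / (u \<bullet> u)) *\<^sub>R outer u u"

lemma outer_mult: "outer u w ** outer x y = (w \<bullet> x) *\<^sub>R outer u y"
  by (simp add: outer_def matrix_matrix_mult_def vec_eq_iff inner_vec_def sum_distrib_left
      sum_distrib_right mult_ac)

lemma outer_mult_vector: "outer u w *v y = (w \<bullet> y) *\<^sub>R u"
  by (simp add: outer_def matrix_vector_mult_def vec_eq_iff inner_vec_def sum_distrib_left mult_ac)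

lemma trace_outer_mult: "trace (outer u w ** M) = w \<bullet> (M *v u)"
proof -
  have "trace (outer u w ** M) = (\<Sum>k\<in>UNIV. \<Sum>m\<in>UNIV. u$k * w$m * M$m$k)"
    by (simp add: outer_def trace_def matrix_matrix_mult_def)
  also have "\<dots> = (\<Sum>m\<in>UNIV. \<Sum>k\<in>UNIV. w$m * (M$m$k * u$k))"
    by (subst sum.swap) (simp add: mult_ac)
  also have "\<dots> = w \<bullet> (M *v u)"
    by (simp add: inner_vec_def matrix_vector_mult_def sum_distrib_left)
  finally show ?thesis .
qed

lemma householder_mult_vector: "householder u *v y = y - (2 / (u \<bullet> u) * (u \<bullet> y)) *\<^sub>R u"
  by (simp add: householder_def matrix_vector_mult_diff_rdistrib matrix_vector_mult_scaleR
      scaleR_matrix_vector_assoc[symmetric] outer_mult_vector)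

lemma trace_householder_mult:
  "trace (householder u ** M) = trace M - (2 / (u \<bullet> u)) * (u \<bullet> (M *v u))"
  by (simp add: householder_def matrix_mult_diff_right matrix_mult_scaleR_left trace_sub
      trace_scaleR trace_outer_mult)

(* A reflection is a symmetric involution, hence orthogonal. *)

lemma orthogonal_householder:
  assumes "u \<noteq> 0"
  shows "orthogonal_matrix (householder u)"
proof -
  have sym: "transpose (householder u) = householder u"
    by (simp add: householder_def transpose_def vec_eq_iff outer_def mat_def mult.commute)
  have "u \<bullet> u \<noteq> 0" using assms by simp
  then have "householder u ** householder u = mat 1"
    unfolding householder_def
    by (simp add: matrix_mult_diff_left matrix_mult_diff_right matrix_mult_scaleR_left
        matrix_mult_scaleR_right outer_mult)
       (simp add: vec_eq_iff outer_def field_simps)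
  then show ?thesis by (simp add: orthogonal_matrix_def sym)
qed

(* The product of the reflections in e_i and e_i + t e_j is a rotation in the (i,j)-plane;
   this is how it changes tr(R M).  Used to show that a trace maximiser is symmetric. *)

lemma trace_plane_rotation:
  fixes M :: "real^'n^'n"
  assumes "i \<noteq> j"
  shows "trace (householder (axis i 1 + t *\<^sub>R axis j 1) ** (householder (axis i 1) ** M))
       = trace M + 2 * t * ((M$i$j - M$j$i) - t * (M$i$i + M$j$j)) / (1 + t^2)"
proof -
  define u where "u = axis i (1::real)"
  define w where "w = axis i (1::real) + t *\<^sub>R axis j 1"
  have uu: "u \<bullet> u = 1" by (simp add: u_def inner_axis_axis)
  have ww: "w \<bullet> w = 1 + t^2" using assms
    by (simp add: w_def inner_add_left inner_add_right inner_axis_axis power2_eq_square)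
  have wu: "w \<bullet> u = 1" using assms
    by (simp add: w_def u_def inner_add_left inner_axis_axis)
  have uMu: "u \<bullet> (M *v u) = M$i$i" by (simp add: u_def matrix_entry_axis)
  have uMw: "u \<bullet> (M *v w) = M$i$i + t * M$i$j"
    by (simp add: u_def w_def matrix_vector_right_distrib matrix_vector_mult_scaleR
        inner_add_right matrix_entry_axis)
  have wMw: "w \<bullet> (M *v w) = M$i$i + t * M$i$j + t * M$j$i + t^2 * M$j$j"
    by (simp add: w_def matrix_vector_right_distrib matrix_vector_mult_scaleR inner_add_right
        inner_add_left matrix_entry_axis algebra_simps power2_eq_square)
  have pos: "1 + t^2 \<noteq> 0"
    by (metis add_pos_nonneg zero_less_one zero_le_power2 less_irrefl)
  have "trace (householder w ** (householder u ** M))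
      = trace M - 2 * M$i$i - (2 / (1 + t^2)) * (w \<bullet> (M *v w) - 2 * (u \<bullet> (M *v w)))"
    by (simp add: trace_householder_mult ww uu uMu wu householder_mult_vector inner_diff_right
        matrix_vector_mul_assoc[symmetric] algebra_simps)
  also have "\<dots> = trace M + 2 * t * ((M$i$j - M$j$i) - t * (M$i$i + M$j$j)) / (1 + t^2)"
    using pos unfolding uMw wMw by (simp add: field_simps power2_eq_square)
  finally show ?thesis by (simp add: u_def w_def)
qed

section \<open>Maximising the trace over the orthogonal group\<close>

(* The orthogonal group is compact: bounded (its rows are unit vectors) and closed. *)

lemma compact_orthogonal_matrices: "compact {Q::real^'n^'n. orthogonal_matrix Q}"
proof (rule compact_eq_bounded_closed[THEN iffD2], rule conjI)
  show "bounded {Q::real^'n^'n. orthogonal_matrix Q}"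
    unfolding bounded_iff
  proof (intro exI ballI)
    fix Q :: "real^'n^'n" assume "Q \<in> {Q. orthogonal_matrix Q}"
    then have rows: "norm (Q$i) = 1" for i
      using orthogonal_matrix_orthonormal_rows[of Q] by (auto simp: row_def)
    have "norm Q = L2_set (\<lambda>i. norm (Q$i)) UNIV" by (simp add: norm_vec_def)
    also have "\<dots> \<le> sum (\<lambda>i. norm (Q$i)) UNIV" by (rule L2_set_le_sum) auto
    finally show "norm Q \<le> real CARD('n)" using rows by simp
  qed
  have cont: "continuous_on UNIV (\<lambda>Q::real^'n^'n. transpose Q ** Q)"
    unfolding matrix_matrix_mult_def transpose_def
    by (intro continuous_intros continuous_on_vec_lambda)
  have "{Q::real^'n^'n. orthogonal_matrix Q} = (\<lambda>Q. transpose Q ** Q) -` {mat 1}"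
    by (auto simp: orthogonal_matrix)
  then show "closed {Q::real^'n^'n. orthogonal_matrix Q}"
    using continuous_on_closed_vimage[OF closed_UNIV, THEN iffD1, OF cont, rule_format,
        OF closed_singleton[of "mat 1"]]
    by simp
qed

lemma trace_maximiser_exists:
  fixes X :: "real^'n^'n"
  obtains Q where "orthogonal_matrix Q"
    and "\<And>R. orthogonal_matrix R \<Longrightarrow> trace (transpose R ** X) \<le> trace (transpose Q ** X)"
proof -
  have "continuous_on {Q::real^'n^'n. orthogonal_matrix Q} (\<lambda>Q. trace (transpose Q ** X))"
    unfolding trace_def matrix_matrix_mult_def transpose_def
    by (intro continuous_intros)
  then obtain Q where "orthogonal_matrix Q"
    and "\<forall>R\<in>{Q. orthogonal_matrix Q}. trace (transpose R ** X) \<le> trace (transpose Q ** X)"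
    using continuous_attains_sup[OF compact_orthogonal_matrices] orthogonal_matrix_id by blast
  then show ?thesis using that by auto
qed

(* If no orthogonal R increases tr(R M), then M is positive semidefinite (test against one
   reflection) and symmetric (test against plane rotations). *)

lemma trace_maximal_psd:
  fixes M :: "real^'n^'n"
  assumes max: "\<And>R. orthogonal_matrix R \<Longrightarrow> trace (R ** M) \<le> trace M"
  shows "0 \<le> v \<bullet> (M *v v)"
proof (cases "v = 0")
  case False
  have "trace (householder v ** M) \<le> trace M"
    using max orthogonal_householder[OF False] by blast
  then have "0 \<le> (2 / (v \<bullet> v)) * (v \<bullet> (M *v v))"
    by (simp add: trace_householder_mult)
  moreover have "v \<bullet> v > 0" using False by simp
  ultimately show ?thesis by (simp add: zero_le_mult_iff zero_le_divide_iff)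
qed simp

lemma trace_maximal_symmetric:
  fixes M :: "real^'n^'n"
  assumes max: "\<And>R. orthogonal_matrix R \<Longrightarrow> trace (R ** M) \<le> trace M"
  shows "transpose M = M"
proof -
  have le: "M$i$j \<le> M$j$i" if "i \<noteq> j" for i j
  proof (rule ccontr)
    assume "\<not> M$i$j \<le> M$j$i"
    then have gap: "M$i$j - M$j$i > 0" by simp
    define t where "t = (M$i$j - M$j$i) / (\<bar>M$i$i + M$j$j\<bar> + 1)"
    have t: "t > 0" using gap by (simp add: t_def)
    have "t * (M$i$i + M$j$j) \<le> t * \<bar>M$i$i + M$j$j\<bar>" using t by simp
    also have "\<dots> < M$i$j - M$j$i" using gap by (simp add: t_def field_simps)
    finally have "0 < 2 * t * ((M$i$j - M$j$i) - t * (M$i$i + M$j$j)) / (1 + t^2)"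
      using t by (simp add: add_pos_nonneg)
    moreover have "orthogonal_matrix
        (householder (axis i 1 + t *\<^sub>R axis j 1) ** householder (axis i (1::real)))"
      using \<open>i \<noteq> j\<close>
      by (intro orthogonal_matrix_mul orthogonal_householder) (simp_all add: vec_eq_iff axis_def, metis)
    ultimately show False
      using max trace_plane_rotation[OF \<open>i \<noteq> j\<close>, of t M] by (fastforce simp: matrix_mul_assoc)
  qed
  show ?thesis
    by (simp add: vec_eq_iff transpose_def) (metis le order_antisym)
qed

section \<open>Symmetric positive semidefinite contractions\<close>

lemma symmetric_form_swap:
  assumes "transpose M = (M::real^'n^'n)"
  shows "w \<bullet> (M *v v) = v \<bullet> (M *v w)"
  by (metis assms dot_lmul_matrix inner_commute transpose_matrix_vector)

lemma psd_cauchy_schwarz: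
  fixes M :: "real^'n^'n"
  assumes sym: "transpose M = M" and psd: "\<And>v. 0 \<le> v \<bullet> (M *v v)"
  shows "(v \<bullet> (M *v w))^2 \<le> (v \<bullet> (M *v v)) * (w \<bullet> (M *v w))"
proof -
  define a b c where "a = v \<bullet> (M *v v)" and "b = v \<bullet> (M *v w)" and "c = w \<bullet> (M *v w)"
  have quad: "0 \<le> a + 2 * s * b + s^2 * c" for s
  proof -
    have "0 \<le> (v + s *\<^sub>R w) \<bullet> (M *v (v + s *\<^sub>R w))" by (rule psd)
    also have "\<dots> = a + s * (w \<bullet> (M *v v)) + s * b + s^2 * c"
      by (simp add: a_def b_def c_def algebra_simps inner_add_left inner_add_right power2_eq_square)
    also have "w \<bullet> (M *v v) = b" using symmetric_form_swap[OF sym] b_def by simp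
    finally show ?thesis by (simp add: algebra_simps)
  qed
  show ?thesis
  proof (cases "c = 0")
    case True
    have "b = 0"
    proof (rule ccontr)
      assume "b \<noteq> 0"
      have "0 \<le> a + 2 * (-(a+1)/(2*b)) * b" using quad[of "-(a+1)/(2*b)"] True by simp
      also have "\<dots> = -1" using \<open>b \<noteq> 0\<close> by (simp add: field_simps)
      finally show False by simp
    qed
    then show ?thesis using True by (simp add: b_def c_def)
  next
    case False
    then have "c > 0" using psd[of w] c_def by simp
    have "0 \<le> a + 2 * (-b/c) * b + (-b/c)^2 * c" by (rule quad)
    also have "\<dots> = a - b^2 / c" using \<open>c > 0\<close> by (simp add: field_simps power2_eq_square)
    finally have "b^2 \<le> a * c" using \<open>c > 0\<close> by (simp add: field_simps)
    then show ?thesis by (simp add: a_def b_def c_def)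
  qed
qed

(* For a symmetric positive semidefinite contraction, |M v|^2 <= v . M v
   (in spectral terms: lambda^2 <= lambda for eigenvalues in [0,1]). *)

lemma psd_contraction_square:
  fixes M :: "real^'n^'n"
  assumes sym: "transpose M = M" and psd: "\<And>v. 0 \<le> v \<bullet> (M *v v)"
    and contr: "\<And>v. norm (M *v v) \<le> norm v"
  shows "(norm (M *v v))^2 \<le> v \<bullet> (M *v v)"
proof -
  define y where "y = M *v v"
  have "y \<bullet> (M *v y) \<le> norm y * norm (M *v y)" by (rule norm_cauchy_schwarz)
  also have "\<dots> \<le> norm y * norm y" using contr[of y] by (simp add: mult_left_mono)
  finally have yMy: "y \<bullet> (M *v y) \<le> (norm y)^2" by (simp add: power2_eq_square)
  have "((norm y)^2)^2 = (v \<bullet> (M *v y))^2"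
    using symmetric_form_swap[OF sym, of v y] by (simp add: y_def power2_norm_eq_inner)
  also have "\<dots> \<le> (v \<bullet> (M *v v)) * (y \<bullet> (M *v y))" by (rule psd_cauchy_schwarz[OF sym psd])
  also have "\<dots> \<le> (v \<bullet> (M *v v)) * (norm y)^2" using yMy psd[of v] by (simp add: mult_left_mono)
  finally have sq: "(norm y)^2 * (norm y)^2 \<le> (v \<bullet> (M *v v)) * (norm y)^2"
    by (simp add: power2_eq_square)
  have "(norm y)^2 \<le> v \<bullet> (M *v v)"
  proof (cases "y = 0")
    case False
    then have "0 < (norm y)^2" by simp
    with sq show ?thesis by (rule mult_right_le_imp_le)
  qed (use psd[of v] in simp)
  then show ?thesis by (simp add: y_def)
qed

lemma orthogonal_matrix_norm:
  assumes "orthogonal_matrix (Q::real^'n^'n)"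
  shows "norm (Q *v x) = norm x"
proof -
  have "orthogonal_transformation (\<lambda>x. Q *v x)"
    using assms by (simp add: orthogonal_transformation_matrix)
  then show ?thesis by (simp add: orthogonal_transformation_norm)
qed

(* The polar-decomposition estimate: every real contraction X admits an orthogonal Q with
   |X|^2 <= tr(Q^T X); Q is the orthogonal factor of X = Q P, and tr P >= tr P^2 as 0 <= P <= I. *)

lemma contraction_trace_bound:
  fixes X :: "real^'n^'n"
  assumes contr: "\<And>u. norm (X *v u) \<le> norm u"
  obtains Q where "orthogonal_matrix Q" and "X \<bullet> X \<le> Q \<bullet> X"
proof -
  obtain Q where Q: "orthogonal_matrix Q"
    and Qmax: "\<And>R. orthogonal_matrix R \<Longrightarrow> trace (transpose R ** X) \<le> trace (transpose Q ** X)"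
    using trace_maximiser_exists[of X] by blast
  define M where "M = transpose Q ** X"
  have max: "trace (R ** M) \<le> trace M" if "orthogonal_matrix R" for R
  proof -
    have "orthogonal_matrix (Q ** transpose R)" using Q that by (simp add: orthogonal_matrix_mul)
    from Qmax[OF this] show ?thesis
      by (simp add: M_def matrix_transpose_mul matrix_mul_assoc)
  qed
  have isometry: "norm (transpose Q *v x) = norm x" for x
    using Q by (simp add: orthogonal_matrix_norm del: transpose_matrix_vector)
  have M_sym: "transpose M = M" using max by (rule trace_maximal_symmetric)
  have M_psd: "0 \<le> v \<bullet> (M *v v)" for v using max by (rule trace_maximal_psd)
  have M_contr: "norm (M *v v) \<le> norm v" for v
    using contr isometry by (simp add: M_def matrix_vector_mul_assoc[symmetric])
  have "X \<bullet> X = (\<Sum>k\<in>UNIV. (norm (M *v axis k 1))^2)"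
    using isometry by (simp add: inner_self_columns M_def matrix_vector_mul_assoc[symmetric])
  also have "\<dots> \<le> (\<Sum>k\<in>UNIV. axis k 1 \<bullet> (M *v axis k 1))"
    by (rule sum_mono) (rule psd_contraction_square[OF M_sym M_psd M_contr])
  also have "\<dots> = Q \<bullet> X" by (simp add: trace_as_diagonal_forms[symmetric] M_def inner_matrix_eq_trace)
  finally show ?thesis using Q that by blast
qed

section \<open>Complex matrices through their real and imaginary parts\<close>

definition re_mat :: "complex^'n^'n \<Rightarrow> real^'n^'n" where
  "re_mat A = (\<chi> i j. Re (A$i$j))"

definition im_mat :: "complex^'n^'n \<Rightarrow> real^'n^'n" where
  "im_mat A = (\<chi> i j. Im (A$i$j))"

definition of_real_mat :: "real^'n^'n \<Rightarrow> complex^'n^'n" where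
  "of_real_mat A = (\<chi> i j. complex_of_real (A$i$j))"

lemma of_real_mat_orthogonal:
  assumes "orthogonal_matrix Q"
  shows "of_real_mat Q \<in> orthogonal_group"
proof -
  have mult: "of_real_mat A ** of_real_mat B = of_real_mat (A ** B)" for A B :: "real^'n^'n"
    by (simp add: of_real_mat_def matrix_matrix_mult_def vec_eq_iff)
  have adj: "adjoint_mat (of_real_mat A) = of_real_mat (transpose A)"
    and tr: "transpose (of_real_mat A) = of_real_mat (transpose A)" for A :: "real^'n^'n"
    by (simp_all add: of_real_mat_def adjoint_mat_def transpose_def vec_eq_iff)
  have one: "of_real_mat (mat 1 :: real^'n^'n) = mat 1"
    by (simp add: of_real_mat_def mat_def vec_eq_iff)
  have "of_real_mat (transpose Q ** Q) = mat 1" "of_real_mat (Q ** transpose Q) = mat 1"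
    using assms one by (simp_all add: orthogonal_matrix_def)
  then show ?thesis
    by (auto simp: orthogonal_group_def unitary_group_def adj tr mult)
qed

lemma re_adjoint_mult:
  "(\<chi> j k. Re ((adjoint_mat A ** A)$j$k))
     = transpose (re_mat A) ** re_mat A + transpose (im_mat A) ** im_mat A"
proof -
  have "Re ((adjoint_mat A ** A)$j$k)
      = (\<Sum>i\<in>UNIV. Re (A$i$j) * Re (A$i$k)) + (\<Sum>i\<in>UNIV. Im (A$i$j) * Im (A$i$k))" for j k
    by (simp add: matrix_matrix_mult_def adjoint_mat_def sum.distrib)
  then show ?thesis
    by (simp add: vec_eq_iff matrix_matrix_mult_def transpose_def re_mat_def im_mat_def)
qed

lemma re_trace_adjoint_mult:
  "Re (trace (adjoint_mat A ** A)) = re_mat A \<bullet> re_mat A + im_mat A \<bullet> im_mat A"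
proof -
  have "Re (trace (adjoint_mat A ** A)) = trace (\<chi> j k. Re ((adjoint_mat A ** A)$j$k))"
    by (simp add: trace_def)
  also have "\<dots> = trace (transpose (re_mat A) ** re_mat A + transpose (im_mat A) ** im_mat A)"
    by (simp only: re_adjoint_mult)
  also have "\<dots> = re_mat A \<bullet> re_mat A + im_mat A \<bullet> im_mat A"
    by (simp only: trace_add inner_matrix_eq_trace)
  finally show ?thesis .
qed

lemma re_trace_mult_transpose:
  "Re (trace (A ** transpose A)) = re_mat A \<bullet> re_mat A - im_mat A \<bullet> im_mat A"
  by (simp add: trace_def matrix_matrix_mult_def transpose_def re_mat_def im_mat_def
      inner_vec_def sum_subtractf)

lemma re_trace_adjoint_diff_of_real:
  "Re (trace (adjoint_mat (A - of_real_mat Q) ** (A - of_real_mat Q)))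
     = re_mat A \<bullet> re_mat A + im_mat A \<bullet> im_mat A + Q \<bullet> Q - 2 * (Q \<bullet> re_mat A)"
proof -
  have "re_mat (A - of_real_mat Q) = re_mat A - Q" "im_mat (A - of_real_mat Q) = im_mat A"
    by (simp_all add: re_mat_def im_mat_def of_real_mat_def vec_eq_iff)
  then have "Re (trace (adjoint_mat (A - of_real_mat Q) ** (A - of_real_mat Q)))
      = (re_mat A - Q) \<bullet> (re_mat A - Q) + im_mat A \<bullet> im_mat A"
    by (simp only: re_trace_adjoint_mult)
  then show ?thesis
    using inner_diff_self[of "re_mat A" Q] by linarith
qed

(* The real part of a unitary matrix is a contraction, since |X u|^2 + |Y u|^2 = |u|^2. *)

lemma unitary_re_contraction:
  assumes "adjoint_mat A ** A = mat 1"
  shows "norm (re_mat A *v u) \<le> norm u"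
proof -
  have "transpose (re_mat A) ** re_mat A + transpose (im_mat A) ** im_mat A
      = (\<chi> j k. Re ((adjoint_mat A ** A)$j$k))"
    by (rule re_adjoint_mult[symmetric])
  also have "\<dots> = mat 1"
    by (simp add: assms mat_def vec_eq_iff if_distrib[where f=Re])
  finally have gram: "transpose (re_mat A) ** re_mat A + transpose (im_mat A) ** im_mat A = mat 1" .
  have "(norm (re_mat A *v u))^2 + (norm (im_mat A *v u))^2 = u \<bullet> u"
    by (simp add: norm_matrix_vector_sq inner_add_right[symmetric]
        matrix_vector_mult_add_rdistrib[symmetric] gram)
  then have "(norm (re_mat A *v u))^2 \<le> (norm u)^2"
    by (metis le_add_same_cancel1 power2_norm_eq_inner zero_le_power2)
  then show ?thesis by (simp add: power2_le_iff_abs_le)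
qed

lemma scale_mat_unitary:
  assumes "cmod c = 1" and "adjoint_mat U ** U = mat 1"
  shows "adjoint_mat (scale_mat c U) ** scale_mat c U = mat 1"
proof -
  have "cnj c * c = 1"
    using assms(1) complex_norm_square[of c] by (simp add: mult.commute)
  have adj: "adjoint_mat (scale_mat c U) = scale_mat (cnj c) (adjoint_mat U)"
    by (simp add: adjoint_mat_def scale_mat_def vec_eq_iff)
  have mult: "scale_mat a B ** scale_mat b C = scale_mat (a * b) (B ** C)"
    for a b and B C :: "complex^'n^'n"
    by (simp add: scale_mat_def matrix_matrix_mult_def vec_eq_iff sum_distrib_left mult_ac)
  have "adjoint_mat (scale_mat c U) ** scale_mat c U = scale_mat (cnj c * c) (adjoint_mat U ** U)"
    by (simp only: adj mult)
  also have "\<dots> = mat 1"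
    using \<open>cnj c * c = 1\<close> assms(2) by (simp add: scale_mat_def mat_def vec_eq_iff)
  finally show ?thesis .
qed

lemma trace_scale_mat_mult_transpose:
  "trace (scale_mat c A ** transpose (scale_mat c A)) = c^2 * trace (A ** transpose A)"
  by (simp add: scale_mat_def trace_def matrix_matrix_mult_def transpose_def sum_distrib_left
      power2_eq_square mult_ac)

lemma phase_alignment:
  obtains \<theta> where "\<theta> \<in> {0..<2*pi}" and "(exp (\<i> * complex_of_real \<theta>))^2 * z = complex_of_real (cmod z)"
proof -
  define \<theta>0 where "\<theta>0 = - Arg z / 2"
  define \<theta> where "\<theta> = (if \<theta>0 < 0 then \<theta>0 + pi else \<theta>0)"
  have b: "- pi < Arg z" "Arg z \<le> pi" using Arg_bounded by auto
  have range: "\<theta> \<in> {0..<2*pi}" using b by (auto simp: \<theta>_def \<theta>0_def)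
  have "2 * \<theta> + Arg z = 0 \<or> 2 * \<theta> + Arg z = 2 * pi" by (auto simp: \<theta>_def \<theta>0_def)
  then have full_turn: "cis (2 * \<theta> + Arg z) = 1"
    by (elim disjE) (simp_all only: cis_zero cis_2pi)
  have "(exp (\<i> * complex_of_real \<theta>))^2 * z = cis \<theta> ^ 2 * rcis (cmod z) (Arg z)"
    by (simp add: cis_conv_exp rcis_cmod_Arg)
  also have "\<dots> = complex_of_real (cmod z) * cis (2 * \<theta> + Arg z)"
    by (simp add: power2_eq_square cis_mult rcis_def mult_ac add.commute)
  also have "\<dots> = complex_of_real (cmod z)" by (simp only: full_turn mult_1_right)
  finally show ?thesis using range that by blast
qed

lemma mat_set_dist_le:
  fixes A B :: "complex^'n^'n"
  assumes "B \<in> S" and "\<theta> \<in> {0..<2*pi}"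
  shows "mat_set_dist A S
    \<le> sqrt (Re (trace (adjoint_mat (scale_mat (exp (\<i> * complex_of_real \<theta>)) A - B)
                        ** (scale_mat (exp (\<i> * complex_of_real \<theta>)) A - B)))
            / (2 * real CARD('n)))"
proof -
  have frob_nonneg: "0 \<le> frob_norm C" for C :: "complex^'n^'n"
    by (simp add: frob_norm_def trace_def matrix_matrix_mult_def adjoint_mat_def sum_nonneg)
  have dist_nonneg: "0 \<le> mat_dist A C" for C
    unfolding mat_dist_def by (rule cINF_greatest) (auto simp: frob_nonneg pi_gt_zero)
  have "mat_set_dist A S \<le> mat_dist A B"
    unfolding mat_set_dist_def
    by (rule cINF_lower) (auto intro!: bdd_belowI[where m=0] dist_nonneg assms(1))
  also have "\<dots> \<le> frob_norm (scale_mat (exp (\<i> * complex_of_real \<theta>)) A - B)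
                  / sqrt (2 * real CARD('n))"
    unfolding mat_dist_def
    by (rule cINF_lower[OF _ assms(2)]) (auto intro!: bdd_belowI[where m=0] simp: frob_nonneg)
  finally show ?thesis by (simp add: frob_norm_def real_sqrt_divide)
qed

theorem lemma2:
  fixes U :: "complex^'n^'n" and \<delta> :: real
  assumes "U \<in> unitary_group"
    and "\<delta> \<ge> 0"
    and "cmod (trace (U ** transpose U)) \<ge> real CARD('n) * (1 - \<delta>)"
  shows "mat_set_dist U orthogonal_group \<le> sqrt \<delta>"
proof -
  define N where "N = real CARD('n)"
  obtain \<theta> where \<theta>: "\<theta> \<in> {0..<2*pi}"
    and aligned: "(exp (\<i> * complex_of_real \<theta>))^2 * trace (U ** transpose U)
                  = complex_of_real (cmod (trace (U ** transpose U)))"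
    by (rule phase_alignment)
  define A where "A = scale_mat (exp (\<i> * complex_of_real \<theta>)) U"
  define X Y where "X = re_mat A" and "Y = im_mat A"
  have unitary: "adjoint_mat A ** A = mat 1"
    using assms(1) by (simp add: A_def unitary_group_def scale_mat_unitary)
  have norms: "X \<bullet> X + Y \<bullet> Y = N"
    using re_trace_adjoint_mult[of A] by (simp add: unitary trace_I X_def Y_def N_def)
  have trace_UUt: "cmod (trace (U ** transpose U)) = X \<bullet> X - Y \<bullet> Y"
    using re_trace_mult_transpose[of A] aligned
    by (simp add: X_def Y_def A_def trace_scale_mat_mult_transpose)
  obtain Q where Q: "orthogonal_matrix Q" and polar: "X \<bullet> X \<le> Q \<bullet> X"
    using contraction_trace_bound unitary_re_contraction[OF unitary] unfolding X_def by blast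
  define F where "F = Re (trace (adjoint_mat (A - of_real_mat Q) ** (A - of_real_mat Q)))"
  have "F = X \<bullet> X + Y \<bullet> Y + Q \<bullet> Q - 2 * (Q \<bullet> X)"
    by (simp add: F_def re_trace_adjoint_diff_of_real X_def Y_def)
  also have "\<dots> \<le> N * \<delta>"
    using norms inner_self_orthogonal[OF Q] polar trace_UUt assms(3) unfolding N_def
    by (simp add: algebra_simps)
  finally have F_le: "F \<le> N * \<delta>" .
  have "mat_set_dist U orthogonal_group \<le> sqrt (F / (2 * N))"
    using mat_set_dist_le[OF of_real_mat_orthogonal[OF Q] \<theta>, of U] by (simp add: F_def A_def N_def)
  also have "\<dots> \<le> sqrt (N * \<delta> / (2 * N))"
    using F_le by (intro real_sqrt_le_mono divide_right_mono) (simp_all add: N_def)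
  also have "\<dots> \<le> sqrt \<delta>"
    using assms(2) by (simp add: N_def)
  finally show ?thesis .
qed

end
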